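(* Let $m,d\geq 1$ be integers and let $f:[0,4]\to\mathbb{R}$ be continuous on $[0,4]$ and $(2m-2)$ times differentiable on $(0,4)$ (differentiable on $(0,4)$ in any case), with $f^{(2m-2)}$ convex on $(0,4)$. Let $\omega_N=\{\mathbf{x}_1,\ldots,\mathbf{x}_N\}\subset S^d$ be an antipodal $m$-sharp configuration. Then the potential $$p_f(\mathbf{x},\omega_N)=\sum_{i=1}^N f(|\mathbf{x}-\mathbf{x}_i|^2),\qquad \mathbf{x}\in S^d,$$ attains its absolute maximum over $S^d$ at every point of $\omega_N$. If moreover $f^{(2m-2)}$ is strictly convex on $(0,4)$, then every point of $S^d$ at which $p_f(\cdot,\omega_N)$ attains its absolute maximum over $S^d$ belongs to $\omega_N$.
   Context: $S^d=\{\mathbf{x}\in\mathbb{R}^{d+1}:|\mathbf{x}|=1\}$, with $|\cdot|$ the Euclidean norm; $\sigma_d$ is the normalized (probability) surface area measure on $S^d$. A finite configuration $\omega_N=\{\mathbf{x}_1,\dots,\mathbf{x}_N\}\subset S^d$ is a spherical $n$-design if $\frac1N\sum_{i=1}^N p(\mathbf{x}_i)=\int_{S^d}p\,d\sigma_d$ for every polynomial $p$ on $\mathbb{R}^{d+1}$ of degree at most $n$. A configuration of $N$ distinct points $\omega_N\subset S^d$ is $m$-sharp if it is a spherical $(2m-1)$-design and exactly $m$ distinct values occur as dot products $\mathbf{x}\cdot\mathbf{y}$ of distinct points $\mathbf{x},\mathbf{y}\in\omega_N$. A configuration is antipodal if $-\mathbf{x}\in\omega_N$ whenever $\mathbf{x}\in\omega_N$.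 Here $f^{(0)}=f$. *)

theory Defs
  imports "HOL-Analysis.Analysis"
begin

definition monomial :: "('n::finite \<Rightarrow> nat) \<Rightarrow> real^'n \<Rightarrow> real" where
  "monomial \<alpha> x = (\<Prod>i\<in>UNIV. (x $ i) ^ (\<alpha> i))"

definition polys_upto :: "nat \<Rightarrow> (real^'n::finite \<Rightarrow> real) set" where
  "polys_upto n = {p. \<exists>A c. finite A \<and> (\<forall>\<alpha>\<in>A. (\<Sum>i\<in>UNIV. \<alpha> i) \<le> n) \<and>
        p = (\<lambda>x. \<Sum>\<alpha>\<in>A. c \<alpha> * monomial \<alpha> x)}"

(* Integral against the normalized surface measure sigma_d on the unit sphere,
   realised as the cone measure: int f dsigma = (1/|B|) int_B f(x/|x|) dx *)
definition sphere_avg :: "(real^'n::finite \<Rightarrow> real) \<Rightarrow> real" where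
  "sphere_avg f = integral (cball 0 1) (\<lambda>x. f (x /\<^sub>R norm x)) / measure lebesgue (cball (0::real^'n) 1)"

definition spherical_design :: "nat \<Rightarrow> (real^'n::finite) set \<Rightarrow> bool" where
  "spherical_design n \<omega> \<longleftrightarrow> finite \<omega> \<and> \<omega> \<noteq> {} \<and> \<omega> \<subseteq> sphere 0 1 \<and>
     (\<forall>p\<in>polys_upto n. (\<Sum>x\<in>\<omega>. p x) / real (card \<omega>) = sphere_avg p)"

definition sharp_config :: "nat \<Rightarrow> (real^'n::finite) set \<Rightarrow> bool" where
  "sharp_config m \<omega> \<longleftrightarrow> spherical_design (2*m - 1) \<omega> \<and>
     card {x \<bullet> y | x y. x \<in> \<omega> \<and> y \<in> \<omega> \<and> x \<noteq> y} = m"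

definition antipodal :: "(real^'n::finite) set \<Rightarrow> bool" where
  "antipodal \<omega> \<longleftrightarrow> (\<forall>x\<in>\<omega>. - x \<in> \<omega>)"

definition strict_convex_on :: "real set \<Rightarrow> (real \<Rightarrow> real) \<Rightarrow> bool" where
  "strict_convex_on S f \<longleftrightarrow> convex S \<and>
    (\<forall>x\<in>S. \<forall>y\<in>S. \<forall>u>0. \<forall>v>0. x \<noteq> y \<longrightarrow> u + v = 1 \<longrightarrow> f (u * x + v * y) < u * f x + v * f y)"

definition potential :: "(real \<Rightarrow> real) \<Rightarrow> (real^'n::finite) set \<Rightarrow> real^'n \<Rightarrow> real" where
  "potential f \<omega> x = (\<Sum>y\<in>\<omega>. f ((norm (x - y))^2))"

end

theory Submission
  imports Defs "HOL-Computational_Algebra.Polynomial"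
begin

text \<open>Let \<open>U\<close> be the set of numbers \<open>2 - 2t\<close>, \<open>t\<close> ranging over the \<open>m - 1\<close> inner products
  \<open>t \<noteq> -1\<close> of distinct points of \<open>\<omega>\<close>, so that all squared distances within \<open>\<omega>\<close> lie in
  \<open>{0, 4} \<union> U\<close>. Hermite interpolation of \<open>f\<close> at \<open>0\<close>, \<open>4\<close> and to first order on \<open>U\<close> yields a
  polynomial \<open>Q\<close> of degree \<open>\<le> 2m - 1\<close>. Otherwise \<open>f - Q\<close> minus a multiple of the node
  polynomial would have too many zeros for a function whose \<open>(2m-2)\<close>-th derivative is strictly
  convex, so \<open>f \<le> Q\<close> on \<open>[0, 4]\<close>, strictly off the nodes if the \<open>(2m-2)\<close>-th derivative of \<open>f\<close>
  is strictly convex. As \<open>\<omega>\<close> is a \<open>(2m-1)\<close>-design and zonal sphere averages do not depend on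
  the pole, the potential of \<open>Q\<close> is constant on the sphere; it dominates the potential of \<open>f\<close>
  and agrees with it on \<open>\<omega>\<close>. At a maximum point \<open>x \<notin> \<omega>\<close> all \<open>x \<bullet> y\<close> would be nodes,
  hence, by antipodality, among the \<open>m - 1\<close> inner products; the square of the polynomial
  vanishing there has degree \<open>2m - 2\<close>, zero sum at \<open>x\<close> and positive sum at a point of \<open>\<omega>\<close>.\<close>

section \<open>Zeros of functions with a strictly convex derivative\<close>

lemma Rolle_finite_zeros:
  fixes F F' :: "real \<Rightarrow> real"
  assumes "finite Z" "Z \<subseteq> {a..b}" "\<forall>z\<in>Z. F z = 0"
    and cont: "continuous_on {a..b} F"
    and deriv: "\<And>t. a < t \<Longrightarrow> t < b \<Longrightarrow> (F has_real_derivative F' t) (at t)"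
  shows "\<exists>B. finite B \<and> card B = card Z - 1 \<and> B \<subseteq> {Min Z<..<Max Z} \<and> B \<inter> Z = {} \<and>
             (\<forall>x\<in>B. F' x = 0)"
  using assms(1-3)
proof (induction Z rule: finite_linorder_max_induct)
  case empty
  then show ?case by (intro exI[of _ "{}"]) simp
next
  case (insert c A)
  show ?case
  proof (cases "A = {}")
    case True
    then show ?thesis by (intro exI[of _ "{}"]) simp
  next
    case False
    have max: "Max A \<in> A" "Max A < c" "Min A \<le> Max A" using insert.hyps False by auto
    have bounds: "Min (insert c A) = Min A" "Max (insert c A) = c"
      using Min_insert[OF insert.hyps(1) False, of c] Max_insert[OF insert.hyps(1) False, of c] max
      by simp_all
    obtain B where B: "finite B" "card B = card A - 1" "B \<subseteq> {Min A<..<Max A}" "B \<inter> A = {}"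
        "\<forall>x\<in>B. F' x = 0"
      using insert.IH insert.prems by auto
    have sub: "{Max A..c} \<subseteq> {a..b}" using insert.prems max(1) by auto
    obtain r where r: "Max A < r" "r < c" "(F has_real_derivative 0) (at r)"
    proof -
      have "\<exists>r>Max A. r < c \<and> (F has_real_derivative 0) (at r)"
      proof (rule Rolle[OF max(2)])
        show "F (Max A) = F c" using insert.prems max(1) by simp
        show "continuous_on {Max A..c} F" using continuous_on_subset[OF cont sub] .
        show "F differentiable (at t)" if "Max A < t" "t < c" for t
          using deriv[of t] that sub by (force simp: real_differentiable_def)
      qed
      then show ?thesis using that by blast
    qed
    have "F' r = 0" using DERIV_unique[OF r(3) deriv[of r]] r sub by force
    have "r \<notin> A" using Max_ge[OF insert.hyps(1), of r] r(1) by auto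
    have "r \<notin> B" "c \<notin> B" using B(3) r max by auto
    have "c \<notin> A" "card A > 0" using insert.hyps False by (auto simp: card_gt_0_iff)
    have "{Min A<..<Max A} \<subseteq> {Min A<..<c}" "r \<in> {Min A<..<c}" using max r(1,2) by auto
    then have "insert r B \<subseteq> {Min (insert c A)<..<Max (insert c A)}"
      unfolding bounds using B(3) by blast
    moreover have "card (insert r B) = card (insert c A) - 1"
      using B(1,2) insert.hyps(1) \<open>r \<notin> B\<close> \<open>c \<notin> A\<close> \<open>card A > 0\<close> by simp
    moreover have "insert r B \<inter> insert c A = {}"
      using B(4) \<open>r \<notin> A\<close> \<open>c \<notin> B\<close> r(2) by auto
    moreover have "finite (insert r B)" "\<forall>x\<in>insert r B. F' x = 0" using B(1,5) \<open>F' r = 0\<close> by auto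
    ultimately show ?thesis by blast
  qed
qed

lemma Rolle_iterated:
  fixes F :: "nat \<Rightarrow> real \<Rightarrow> real"
  assumes "\<And>j t. j < k \<Longrightarrow> t \<in> {a<..<b} \<Longrightarrow> (F j has_real_derivative F (Suc j) t) (at t)"
    and "finite Z" "Z \<subseteq> {a<..<b}" "\<forall>z\<in>Z. F 0 z = 0"
  shows "\<exists>Z'. finite Z' \<and> Z' \<subseteq> {a<..<b} \<and> card Z' = card Z - k \<and> (\<forall>z\<in>Z'. F k z = 0)"
  using assms(1)
proof (induction k)
  case 0
  show ?case using assms(2-4) by (intro exI[of _ Z]) simp
next
  case (Suc k)
  have "\<exists>Z'. finite Z' \<and> Z' \<subseteq> {a<..<b} \<and> card Z' = card Z - k \<and> (\<forall>z\<in>Z'. F k z = 0)"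
    using Suc.prems by (intro Suc.IH) simp
  then obtain Z' where Z': "finite Z'" "Z' \<subseteq> {a<..<b}" "card Z' = card Z - k" "\<forall>z\<in>Z'. F k z = 0"
    by blast
  show ?case
  proof (cases "Z' = {}")
    case True
    then show ?thesis using Z'(3) by (intro exI[of _ "{}"]) auto
  next
    case False
    have sub: "{Min Z'..Max Z'} \<subseteq> {a<..<b}"
      using Z'(1,2) False Min_in Max_in by fastforce
    have deriv: "(F k has_real_derivative F (Suc k) t) (at t)" if "t \<in> {Min Z'..Max Z'}" for t
      using Suc.prems[of k t] sub that by auto
    have "\<exists>B. finite B \<and> card B = card Z' - 1 \<and> B \<subseteq> {Min Z'<..<Max Z'} \<and> B \<inter> Z' = {} \<and>
             (\<forall>b\<in>B. F (Suc k) b = 0)"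
    proof (rule Rolle_finite_zeros[OF Z'(1) _ Z'(4)])
      show "continuous_on {Min Z'..Max Z'} (F k)"
        using deriv by (meson DERIV_isCont continuous_at_imp_continuous_on)
    qed (use deriv Z'(1) in auto)
    then obtain B where "finite B" "card B = card Z' - 1" "B \<subseteq> {Min Z'<..<Max Z'}"
        "\<forall>b\<in>B. F (Suc k) b = 0"
      by blast
    moreover have "{Min Z'<..<Max Z'} \<subseteq> {a<..<b}" using sub by auto
    ultimately show ?thesis using Z'(3) by (intro exI[of _ B]) auto
  qed
qed

lemma strict_convex_onD:
  assumes "strict_convex_on S \<phi>" "x \<in> S" "y \<in> S" "x \<noteq> y" "0 < u" "0 < v" "u + v = 1"
  shows "\<phi> (u * x + v * y) < u * \<phi> x + v * \<phi> y"
  using assms by (simp add: strict_convex_on_def)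

lemma strict_convex_on_imp_convex_on:
  assumes "strict_convex_on S \<phi>"
  shows "convex_on S \<phi>"
proof (rule convex_onI)
  show "convex S" using assms by (simp add: strict_convex_on_def)
  fix t x y :: real assume "0 < t" "t < 1" "x \<in> S" "y \<in> S"
  then show "\<phi> ((1 - t) *\<^sub>R x + t *\<^sub>R y) \<le> (1 - t) * \<phi> x + t * \<phi> y"
    using strict_convex_onD[OF assms, of x y "1 - t" t]
    by (cases "x = y") (auto simp: algebra_simps)
qed

lemma strict_convex_on_card_zeros:
  fixes \<phi> :: "real \<Rightarrow> real"
  assumes conv: "strict_convex_on S \<phi>" and Z: "Z \<subseteq> S" "\<forall>z\<in>Z. \<phi> z = 0"
  shows "card Z \<le> 2"
proof (rule ccontr)
  assume three: "\<not> card Z \<le> 2"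
  then have fin: "finite Z" "Z \<noteq> {}" by (auto intro: card_ge_0_finite)
  define x where "x = Min Z"
  define z where "z = Max Z"
  have "card {x, z} \<le> 2" by (simp add: card_insert_if)
  then have "card (Z - {x, z}) > 0"
    using diff_card_le_card_Diff[of "{x, z}" Z] three by simp
  then obtain y where y: "y \<in> Z" "y \<noteq> x" "y \<noteq> z" by (auto simp: card_gt_0_iff)
  have "x \<le> y" "y \<le> z" using y(1) fin by (simp_all add: x_def z_def)
  then have xy: "x < y" and yz: "y < z" using y(2,3) by simp_all
  define l where "l = (z - y) / (z - x)"
  have l: "0 < l" "0 < 1 - l" using xy yz by (auto simp: l_def field_simps)
  have "l * (z - x) = z - y" using xy yz by (simp add: l_def)
  then have "l * x + (1 - l) * z = y" by (simp add: algebra_simps)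
  moreover have "x \<in> Z" "z \<in> Z" using fin by (simp_all add: x_def z_def)
  ultimately show False
    using strict_convex_onD[OF conv, of x z l "1 - l"] Z y(1) xy yz l by auto
qed

lemma strict_convex_on_critical_point_unique:
  fixes \<phi> :: "real \<Rightarrow> real"
  assumes conv: "strict_convex_on S \<phi>" and S: "open S" and xy: "x \<in> S" "y \<in> S"
    and "(\<phi> has_real_derivative 0) (at x)" "(\<phi> has_real_derivative 0) (at y)"
  shows "x = y"
proof (rule ccontr)
  assume "x \<noteq> y"
  have min: "\<phi> c \<le> \<phi> w" if "c \<in> S" "(\<phi> has_real_derivative 0) (at c)" "w \<in> S" for c w
  proof -
    have "connected S" using conv by (simp add: strict_convex_on_def convex_connected)
    then have "0 * (w - c) \<le> \<phi> w - \<phi> c"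
      by (intro convex_on_imp_above_tangent[OF strict_convex_on_imp_convex_on[OF conv]])
        (use that S in \<open>simp_all add: interior_open has_field_derivative_at_within\<close>)
    then show ?thesis by simp
  qed
  have "(1/2) * x + (1/2) * y \<in> S"
    using conv xy convexD[of S x y "1/2" "1/2"] by (simp add: strict_convex_on_def)
  moreover have "\<phi> ((1/2) * x + (1/2) * y) < (1/2) * \<phi> x + (1/2) * \<phi> y"
    using strict_convex_onD[OF conv xy \<open>x \<noteq> y\<close>, of "1/2" "1/2"] by simp
  moreover have "\<phi> x = \<phi> y" using min assms xy by (meson order.antisym)
  ultimately show False using min[of x "(1/2) * x + (1/2) * y"] assms by simp
qed

lemma strict_convex_on_add_quadratic:
  fixes h :: "real \<Rightarrow> real"
  assumes "convex S" "convex_on S h" "c \<ge> 0" "c > 0 \<or> strict_convex_on S h"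
  shows "strict_convex_on S (\<lambda>t. h t + c * t\<^sup>2 + b * t + a)"
  unfolding strict_convex_on_def
proof (intro conjI ballI allI impI)
  fix x y u v :: real
  assume xy: "x \<in> S" "y \<in> S" "x \<noteq> y" and uv: "0 < u" "0 < v" "u + v = 1"
  define m where "m = u * x + v * y"
  have "u = 1 - v" "v \<le> 1" using uv by simp_all
  then have "h m \<le> u * h x + v * h y"
    using convex_onD[OF assms(2), of v x y] xy uv(2) by (simp add: m_def)
  moreover have "h m < u * h x + v * h y" if "strict_convex_on S h"
    using strict_convex_onD[OF that xy uv] by (simp add: m_def)
  moreover have "u * v * (x - y)\<^sup>2 > 0" using xy uv by simp
  moreover have "u * (h x + c * x\<^sup>2 + b * x + a) + v * (h y + c * y\<^sup>2 + b * y + a)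
      - (h m + c * m\<^sup>2 + b * m + a) = (u * h x + v * h y - h m) + c * (u * v * (x - y)\<^sup>2)"
    unfolding m_def using uv(3) by algebra
  ultimately show "h m + c * m\<^sup>2 + b * m + a
      < u * (h x + c * x\<^sup>2 + b * x + a) + v * (h y + c * y\<^sup>2 + b * y + a)"
    using assms(3,4) by (smt (verit) mult_nonneg_nonneg mult_pos_pos)
qed (use assms in simp)

lemma Rolle_double_zeros:
  fixes F F' :: "real \<Rightarrow> real"
  assumes cont: "continuous_on {a..b} F"
    and deriv: "\<And>t. t \<in> {a<..<b} \<Longrightarrow> (F has_real_derivative F' t) (at t)"
    and Z: "finite Z" "Z \<subseteq> {a..b}" "\<forall>z\<in>Z. F z = 0"
    and U: "U \<subseteq> Z \<inter> {a<..<b}" "\<forall>u\<in>U. F' u = 0"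
  shows "\<exists>Z'. finite Z' \<and> Z' \<subseteq> {a<..<b} \<and> card Z' = card Z - 1 + card U \<and> (\<forall>z\<in>Z'. F' z = 0)"
proof (cases "Z = {}")
  case False
  have sub: "{Min Z<..<Max Z} \<subseteq> {a<..<b}"
    using Z(1,2) False Min_in Max_in by fastforce
  have "\<exists>B. finite B \<and> card B = card Z - 1 \<and> B \<subseteq> {Min Z<..<Max Z} \<and> B \<inter> Z = {} \<and>
           (\<forall>b\<in>B. F' b = 0)"
    by (rule Rolle_finite_zeros[OF Z cont]) (use deriv in auto)
  then obtain B where B: "finite B" "card B = card Z - 1" "B \<subseteq> {a<..<b}" "B \<inter> Z = {}"
      "\<forall>b\<in>B. F' b = 0"
    using sub by blast
  have "finite U" using U(1) Z(1) finite_subset by auto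
  moreover have "B \<inter> U = {}" using B(4) U(1) by blast
  ultimately show ?thesis
    using B U by (intro exI[of _ "B \<union> U"]) (auto simp: card_Un_disjoint)
qed (use U in \<open>auto intro: exI[of _ "{}"]\<close>)

lemma card_zeros_le_of_strict_convex_derivative:
  fixes F :: "nat \<Rightarrow> real \<Rightarrow> real"
  assumes cont: "continuous_on {a..b} (F 0)"
    and deriv: "\<And>j t. j = 0 \<or> j < 2 * card U \<Longrightarrow> t \<in> {a<..<b} \<Longrightarrow>
                  (F j has_real_derivative F (Suc j) t) (at t)"
    and conv: "strict_convex_on {a<..<b} (F (2 * card U))"
    and Z: "finite Z" "Z \<subseteq> {a..b}" "\<forall>z\<in>Z. F 0 z = 0"
    and U: "U \<subseteq> Z \<inter> {a<..<b}" "\<forall>u\<in>U. F 1 u = 0"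
  shows "card Z \<le> card U + 2"
proof -
  obtain Z1 where Z1: "finite Z1" "Z1 \<subseteq> {a<..<b}" "card Z1 = card Z - 1 + card U"
      "\<forall>z\<in>Z1. F 1 z = 0"
    using Rolle_double_zeros[OF cont _ Z U] deriv[of 0] by auto
  show ?thesis
  proof (cases "card U = 0")
    case True
    have crit: "(F 0 has_real_derivative 0) (at z)" if "z \<in> Z1" for z
      using deriv[of 0 z] Z1(2,4) that by auto
    have "x = y" if "x \<in> Z1" "y \<in> Z1" for x y
    proof (rule strict_convex_on_critical_point_unique[OF _ open_greaterThanLessThan])
      show "strict_convex_on {a<..<b} (F 0)" using conv True by simp
    qed (use that Z1(2) crit in auto)
    then have "card Z1 \<le> 1" using Z1(1) by (simp add: card_le_Suc0_iff_eq)
    then show ?thesis using Z1(3) True by simp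
  next
    case False
    have "\<exists>Z'. finite Z' \<and> Z' \<subseteq> {a<..<b} \<and> card Z' = card Z1 - (2 * card U - 1) \<and>
             (\<forall>z\<in>Z'. F (Suc (2 * card U - 1)) z = 0)"
      by (rule Rolle_iterated[of "2 * card U - 1" a b "\<lambda>j. F (Suc j)"]) (use deriv Z1 in auto)
    then obtain Z' where "Z' \<subseteq> {a<..<b}" "card Z' = card Z1 - (2 * card U - 1)"
        "\<forall>z\<in>Z'. F (2 * card U) z = 0"
      using False by auto
    then have "card Z1 - (2 * card U - 1) \<le> 2" using strict_convex_on_card_zeros[OF conv] by metis
    then show ?thesis using Z1(3) False by linarith
  qed
qed

section \<open>Hermite interpolation\<close>

definition node_poly :: "'a::field set \<Rightarrow> 'a poly" where
  "node_poly S = (\<Prod>a\<in>S. [:- a, 1:])"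

lemma poly_node_poly: "poly (node_poly S) x = (\<Prod>a\<in>S. x - a)"
  by (simp add: node_poly_def poly_prod)

lemma poly_node_poly_eq_0: "finite S \<Longrightarrow> x \<in> S \<Longrightarrow> poly (node_poly S) x = 0"
  by (auto simp: poly_node_poly)

lemma degree_node_poly: "finite S \<Longrightarrow> degree (node_poly S) = card S"
  unfolding node_poly_def by (subst degree_prod_eq_sum_degree) auto

lemma lead_coeff_node_poly: "lead_coeff (node_poly S) = 1"
  by (simp add: node_poly_def lead_coeff_prod)

lemma node_poly_nonzero: "node_poly S \<noteq> 0"
  using lead_coeff_node_poly[of S] by auto

lemma poly_pderiv_node_poly:
  assumes "finite S" "u \<in> S"
  shows "poly (pderiv (node_poly S)) u = (\<Prod>b\<in>S - {u}. u - b)"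
proof -
  have "node_poly S = [:- u, 1:] * node_poly (S - {u})"
    using assms by (simp add: node_poly_def prod.remove)
  then have "pderiv (node_poly S) =
      [:- u, 1:] * pderiv (node_poly (S - {u})) + node_poly (S - {u}) * pderiv [:- u, 1:]"
    by (simp only: pderiv_mult)
  then show ?thesis by (simp add: pderiv_pCons poly_node_poly)
qed

lemma poly_pderiv_mult_power2_eq_0:
  "poly q x = 0 \<Longrightarrow> poly (pderiv (p * q\<^sup>2)) x = 0"
  by (simp add: pderiv_mult pderiv_power_Suc numeral_2_eq_2)

definition lagrange_interpolant :: "'a::field set \<Rightarrow> ('a \<Rightarrow> 'a) \<Rightarrow> 'a poly" where
  "lagrange_interpolant S y =
     (\<Sum>a\<in>S. smult (y a / (\<Prod>b\<in>S - {a}. a - b)) (node_poly (S - {a})))"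

lemma poly_lagrange_interpolant:
  assumes "finite S" "x \<in> S"
  shows "poly (lagrange_interpolant S y) x = y x"
proof -
  let ?term = "\<lambda>a. y a / (\<Prod>b\<in>S - {a}. a - b) * (\<Prod>b\<in>S - {a}. x - b)"
  have "poly (lagrange_interpolant S y) x = (\<Sum>a\<in>S. ?term a)"
    by (simp add: lagrange_interpolant_def poly_sum poly_node_poly)
  also have "\<dots> = ?term x + (\<Sum>a\<in>S - {x}. ?term a)"
    using assms by (simp add: sum.remove)
  also have "(\<Sum>a\<in>S - {x}. ?term a) = 0"
    using assms by (intro sum.neutral) auto
  finally show ?thesis using assms by simp
qed

lemma degree_lagrange_interpolant:
  assumes "finite S"
  shows "degree (lagrange_interpolant S y) \<le> card S - 1"
  unfolding lagrange_interpolant_def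
proof (rule degree_sum_le)
  fix a assume "a \<in> S"
  then show "degree (smult (y a / (\<Prod>b\<in>S - {a}. a - b)) (node_poly (S - {a}))) \<le> card S - 1"
    using assms degree_smult_le by (simp add: degree_node_poly)
qed (use assms in simp)

lemma hermite_interpolation:
  fixes V U :: "'a::field set"
  assumes V: "finite V" and U: "U \<subseteq> V"
  shows "\<exists>Q. degree Q \<le> card V + card U - 1 \<and> (\<forall>v\<in>V. poly Q v = y v) \<and>
             (\<forall>u\<in>U. poly (pderiv Q) u = y' u)"
proof -
  define H where "H = lagrange_interpolant V y"
  define N where "N = node_poly V"
  define C where
    "C = lagrange_interpolant U (\<lambda>u. (y' u - poly (pderiv H) u) / poly (pderiv N) u)"
  define Q where "Q = H + N * C"
  have U_fin: "finite U" using U V finite_subset by auto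
  have N_zero: "poly N v = 0" if "v \<in> V" for v
    using V that by (simp add: N_def poly_node_poly_eq_0)
  have N'_nonzero: "poly (pderiv N) u \<noteq> 0" if "u \<in> U" for u
    using V U that by (auto simp: N_def poly_pderiv_node_poly)
  have "\<forall>v\<in>V. poly Q v = y v"
    using V N_zero by (simp add: Q_def H_def poly_lagrange_interpolant)
  moreover have "\<forall>u\<in>U. poly (pderiv Q) u = y' u"
    using U U_fin N_zero N'_nonzero
    by (auto simp: Q_def C_def pderiv_add pderiv_mult poly_lagrange_interpolant)
  moreover have "degree Q \<le> card V + card U - 1"
  proof -
    have "degree H \<le> card V + card U - 1"
      using degree_lagrange_interpolant[OF V, of y] by (simp add: H_def)
    moreover have "degree (N * C) \<le> card V + card U - 1"
    proof (cases "U = {}")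
      case False
      have "degree (N * C) \<le> degree N + degree C" by (rule degree_mult_le)
      also have "\<dots> \<le> card V + (card U - 1)"
        using degree_lagrange_interpolant[OF U_fin] by (simp add: N_def C_def degree_node_poly V)
      finally have "degree (N * C) \<le> card V + (card U - 1)" .
      moreover have "card U > 0" using False U_fin by (simp add: card_gt_0_iff)
      ultimately show ?thesis by arith
    qed (simp add: C_def lagrange_interpolant_def)
    ultimately show ?thesis by (simp add: Q_def degree_add_le)
  qed
  ultimately show ?thesis by blast
qed

lemma poly_higher_pderiv_quadratic:
  fixes p :: "'a::idom poly"
  assumes "degree p \<le> k + 2"
  shows "poly ((pderiv ^^ k) p) t = coeff ((pderiv ^^ k) p) 0 + coeff ((pderiv ^^ k) p) 1 * t
           + pochhammer (of_nat 3) k * coeff p (k + 2) * t\<^sup>2"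
proof -
  define q where "q = (pderiv ^^ k) p"
  define c where "c = pochhammer (of_nat 3) k * coeff p (k + 2)"
  have "q = [:coeff q 0, coeff q 1, c:]"
  proof (rule poly_eqI)
    fix n :: nat
    consider "n = 0" | "n = 1" | "n = 2" | "n \<ge> 3" by linarith
    then show "coeff q n = coeff [:coeff q 0, coeff q 1, c:] n"
    proof cases
      case 4
      then obtain i where "n = 3 + i" using le_iff_add by blast
      then have "n = Suc (Suc (Suc i))" by simp
      then show ?thesis using assms coeff_eq_0[of p "n + k"]
        by (simp add: q_def coeff_higher_pderiv)
    qed (simp_all add: q_def c_def coeff_higher_pderiv numeral_3_eq_3 numeral_2_eq_2 add.commute)
  qed
  then have "poly q t = poly [:coeff q 0, coeff q 1, c:] t" by simp
  then show ?thesis by (simp add: q_def c_def algebra_simps power2_eq_square)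
qed

definition hermite_node_poly :: "real \<Rightarrow> real \<Rightarrow> real set \<Rightarrow> real poly" where
  "hermite_node_poly a b U = node_poly {a, b} * (node_poly U)\<^sup>2"

lemma degree_hermite_node_poly:
  "a \<noteq> b \<Longrightarrow> finite U \<Longrightarrow> degree (hermite_node_poly a b U) = 2 * card U + 2"
  by (simp add: hermite_node_poly_def degree_mult_eq degree_power_eq node_poly_nonzero
      degree_node_poly)

lemma lead_coeff_hermite_node_poly: "lead_coeff (hermite_node_poly a b U) = 1"
  by (simp add: hermite_node_poly_def lead_coeff_mult lead_coeff_power lead_coeff_node_poly)

lemma poly_hermite_node_poly_eq_0:
  "finite U \<Longrightarrow> v \<in> insert a (insert b U) \<Longrightarrow> poly (hermite_node_poly a b U) v = 0"
  by (auto simp: hermite_node_poly_def poly_node_poly_eq_0)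

lemma poly_pderiv_hermite_node_poly_eq_0:
  "finite U \<Longrightarrow> u \<in> U \<Longrightarrow> poly (pderiv (hermite_node_poly a b U)) u = 0"
  unfolding hermite_node_poly_def by (simp add: poly_pderiv_mult_power2_eq_0 poly_node_poly_eq_0)

lemma poly_hermite_node_poly_neg:
  assumes "finite U" "s \<in> {a<..<b} - U"
  shows "poly (hermite_node_poly a b U) s < 0"
proof -
  have "(s - a) * (s - b) < 0" using assms(2) by (simp add: mult_pos_neg)
  moreover have "(\<Prod>u\<in>U. s - u) \<noteq> 0" using assms by auto
  moreover have "poly (hermite_node_poly a b U) s = (s - a) * (s - b) * (\<Prod>u\<in>U. s - u)\<^sup>2"
    using assms(2) by (simp add: hermite_node_poly_def poly_node_poly)
  ultimately show ?thesis by (simp add: mult_neg_pos)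
qed

context
  fixes f :: "real \<Rightarrow> real" and Q :: "real poly" and a b :: real and U :: "real set"
  assumes ab: "a < b" and U: "finite U" "U \<subseteq> {a<..<b}"
    and cont: "continuous_on {a..b} f"
    and diff: "\<And>j t. j = 0 \<or> j < 2 * card U \<Longrightarrow> t \<in> {a<..<b} \<Longrightarrow>
                 (deriv ^^ j) f differentiable (at t)"
    and conv: "convex_on {a<..<b} ((deriv ^^ (2 * card U)) f)"
    and deg: "degree Q \<le> 2 * card U + 1"
    and val: "\<forall>v\<in>insert a (insert b U). poly Q v = f v"
    and slope: "\<forall>u\<in>U. poly (pderiv Q) u = deriv f u"
begin

lemma strict_convex_on_hermite_remainder:
  assumes K: "K \<le> 0" "K < 0 \<or> strict_convex_on {a<..<b} ((deriv ^^ (2 * card U)) f)"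
  defines "P \<equiv> Q + smult K (hermite_node_poly a b U)"
  shows "strict_convex_on {a<..<b}
           (\<lambda>t. (deriv ^^ (2 * card U)) f t - poly ((pderiv ^^ (2 * card U)) P) t)"
proof -
  let ?R = "(pderiv ^^ (2 * card U)) P"
  have "degree P \<le> 2 * card U + 2"
    using deg degree_hermite_node_poly[of a b U] ab U(1)
    by (simp add: P_def degree_add_le le_trans[OF degree_smult_le])
  moreover have "coeff P (2 * card U + 2) = K"
    using deg lead_coeff_hermite_node_poly[of a b U] degree_hermite_node_poly[of a b U] ab U(1)
    by (simp add: P_def coeff_eq_0)
  ultimately have "(\<lambda>t. (deriv ^^ (2 * card U)) f t - poly ?R t) = (\<lambda>t. (deriv ^^ (2 * card U)) f t
      + (- pochhammer 3 (2 * card U) * K) * t\<^sup>2 + (- coeff ?R 1) * t + (- coeff ?R 0))"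
    by (auto simp: poly_higher_pderiv_quadratic)
  moreover have "strict_convex_on {a<..<b} (\<lambda>t. (deriv ^^ (2 * card U)) f t
      + (- pochhammer 3 (2 * card U) * K) * t\<^sup>2 + (- coeff ?R 1) * t + (- coeff ?R 0))"
  proof (rule strict_convex_on_add_quadratic)
    have "pochhammer (3::real) (2 * card U) > 0" by (simp add: pochhammer_pos)
    then show "- pochhammer 3 (2 * card U) * K \<ge> 0" "- pochhammer 3 (2 * card U) * K > 0 \<or>
        strict_convex_on {a<..<b} ((deriv ^^ (2 * card U)) f)"
      using K by (auto simp: mult_nonneg_nonpos mult_pos_neg)
  qed (use conv in simp_all)
  ultimately show ?thesis by simp
qed

text \<open>If \<open>Q s \<le> f s\<close> at a further point \<open>s\<close>, subtracting from \<open>f - Q\<close> the multiple of the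
  node polynomial that vanishes at \<open>s\<close> leaves too many zeros (counting the double zeros on \<open>U\<close>)
  for a function whose \<open>2 card U\<close>-th derivative is strictly convex.\<close>

lemma hermite_interpolant_gt:
  assumes s: "s \<in> {a<..<b} - U"
    and ne: "poly Q s \<noteq> f s \<or> strict_convex_on {a<..<b} ((deriv ^^ (2 * card U)) f)"
  shows "f s < poly Q s"
proof (rule ccontr)
  assume "\<not> f s < poly Q s"
  define W where "W = hermite_node_poly a b U"
  define K where "K = (f s - poly Q s) / poly W s"
  define F where "F j t = (deriv ^^ j) f t - poly ((pderiv ^^ j) (Q + smult K W)) t" for j t
  have W_neg: "poly W s < 0" using poly_hermite_node_poly_neg[OF U(1) s] by (simp add: W_def)
  have K: "K \<le> 0" "K < 0 \<or> strict_convex_on {a<..<b} ((deriv ^^ (2 * card U)) f)"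
    using \<open>\<not> f s < poly Q s\<close> ne W_neg by (auto simp: K_def divide_nonneg_neg divide_pos_neg)
  have F_deriv: "(F j has_real_derivative F (Suc j) t) (at t)"
    if "j = 0 \<or> j < 2 * card U" "t \<in> {a<..<b}" for j t
  proof -
    have "((deriv ^^ j) f has_real_derivative (deriv ^^ Suc j) f t) (at t)"
      using diff[of j t] that by (simp add: DERIV_deriv_iff_real_differentiable)
    then show ?thesis unfolding F_def by (auto intro!: derivative_eq_intros)
  qed
  have "card (insert s (insert a (insert b U))) \<le> card U + 2"
  proof (rule card_zeros_le_of_strict_convex_derivative[of a b F])
    show "continuous_on {a..b} (F 0)"
      unfolding F_def by (auto intro!: continuous_intros cont)
    show "strict_convex_on {a<..<b} (F (2 * card U))"
      using strict_convex_on_hermite_remainder[OF K] by (simp add: F_def[abs_def] W_def)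
    show "\<forall>z\<in>insert s (insert a (insert b U)). F 0 z = 0"
      using val W_neg U(1) poly_hermite_node_poly_eq_0[OF U(1)]
      by (auto simp: F_def K_def W_def)
    show "\<forall>u\<in>U. F 1 u = 0"
      using slope poly_pderiv_hermite_node_poly_eq_0[OF U(1)]
      by (simp add: F_def W_def pderiv_add pderiv_smult)
  qed (use F_deriv s U ab in auto)
  moreover have "a \<notin> U" "b \<notin> U" using U(2) by auto
  then have "card (insert s (insert a (insert b U))) = card U + 3"
    using s U(1) ab by simp
  ultimately show False by simp
qed

lemma hermite_interpolant_majorant:
  shows "\<forall>s\<in>{a..b}. f s \<le> poly Q s"
    and "strict_convex_on {a<..<b} ((deriv ^^ (2 * card U)) f) \<Longrightarrow>
           \<forall>s\<in>{a..b} - insert a (insert b U). f s < poly Q s"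
  using hermite_interpolant_gt val by (fastforce simp: less_eq_real_def)+

end

lemma hermite_majorant_exists:
  fixes f :: "real \<Rightarrow> real" and U :: "real set"
  assumes ab: "a < b" and U: "finite U" "U \<subseteq> {a<..<b}"
    and cont: "continuous_on {a..b} f"
    and diff: "\<And>j t. j = 0 \<or> j < 2 * card U \<Longrightarrow> t \<in> {a<..<b} \<Longrightarrow>
                 (deriv ^^ j) f differentiable (at t)"
    and conv: "convex_on {a<..<b} ((deriv ^^ (2 * card U)) f)"
  obtains Q where "degree Q \<le> 2 * card U + 1" "\<forall>v\<in>insert a (insert b U). poly Q v = f v"
    "\<forall>s\<in>{a..b}. f s \<le> poly Q s"
    "strict_convex_on {a<..<b} ((deriv ^^ (2 * card U)) f) \<Longrightarrow>
       \<forall>s\<in>{a..b} - insert a (insert b U). f s < poly Q s"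
proof -
  have "a \<notin> U" "b \<notin> U" using U(2) by auto
  then have card: "card (insert a (insert b U)) + card U - 1 = 2 * card U + 1" using ab U(1) by simp
  obtain Q where Q: "degree Q \<le> card (insert a (insert b U)) + card U - 1"
      "\<forall>v\<in>insert a (insert b U). poly Q v = f v" "\<forall>u\<in>U. poly (pderiv Q) u = deriv f u"
    using hermite_interpolation[of "insert a (insert b U)" U f "deriv f"] U(1) by auto
  show thesis
    using that[OF _ Q(2)] hermite_interpolant_majorant[OF ab U cont diff conv _ Q(2,3)] Q(1) card
    by simp
qed

lemma hermite_majorant_inner_nodes:
  fixes f :: "real \<Rightarrow> real" and A :: "real set"
  assumes A: "finite A" "A \<subseteq> {-1<..<1}"
    and cont: "continuous_on {0..4} f"
    and diff: "\<And>j t. j = 0 \<or> j < 2 * card A \<Longrightarrow> t \<in> {0<..<4} \<Longrightarrow>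
                 (deriv ^^ j) f differentiable (at t)"
    and conv: "convex_on {0<..<4} ((deriv ^^ (2 * card A)) f)"
  defines "N \<equiv> (\<lambda>t. 2 - 2 * t) ` insert 1 (insert (-1) A)"
  obtains Q where "degree Q \<le> 2 * card A + 1" "\<forall>v\<in>N. poly Q v = f v"
    "\<forall>s\<in>{0..4}. f s \<le> poly Q s"
    "strict_convex_on {0<..<4} ((deriv ^^ (2 * card A)) f) \<Longrightarrow> \<forall>s\<in>{0..4} - N. f s < poly Q s"
proof -
  define U where "U = (\<lambda>t. 2 - 2 * t) ` A"
  have "card U = card A" by (simp add: U_def card_image inj_on_def)
  moreover have "finite U" "U \<subseteq> {0<..<4}" using A by (auto simp: U_def)
  moreover have "N = insert 0 (insert 4 U)" unfolding N_def U_def image_insert by simp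
  ultimately show thesis
    using hermite_majorant_exists[of 0 4 U f] that cont diff conv by auto
qed

section \<open>Polynomials on \<open>real^'n\<close>\<close>

definition exponents_upto :: "nat \<Rightarrow> ('n::finite \<Rightarrow> nat) set" where
  "exponents_upto n = {\<alpha>. (\<Sum>i\<in>UNIV. \<alpha> i) \<le> n}"

lemma finite_exponents_upto: "finite (exponents_upto n :: ('n::finite \<Rightarrow> nat) set)"
proof -
  have "exponents_upto n \<subseteq> PiE (UNIV::'n set) (\<lambda>_. {..n})"
  proof
    fix \<alpha> :: "'n \<Rightarrow> nat" assume a: "\<alpha> \<in> exponents_upto n"
    have "\<alpha> i \<le> n" for i
    proof -
      have "\<alpha> i \<le> (\<Sum>i\<in>UNIV. \<alpha> i)" by (rule member_le_sum) auto
      then show ?thesis using a by (simp add: exponents_upto_def)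
    qed
    then show "\<alpha> \<in> PiE UNIV (\<lambda>_. {..n})" by (simp add: PiE_UNIV_domain)
  qed
  moreover have "finite (PiE (UNIV::'n set) (\<lambda>_. {..n}))" by (intro finite_PiE) auto
  ultimately show ?thesis by (rule finite_subset)
qed

lemma polys_upto_iff:
  "p \<in> polys_upto n \<longleftrightarrow> (\<exists>c. p = (\<lambda>x. \<Sum>\<alpha>\<in>exponents_upto n. c \<alpha> * monomial \<alpha> x))"
proof
  assume "p \<in> polys_upto n"
  then obtain A c where A: "finite A" "\<forall>\<alpha>\<in>A. (\<Sum>i\<in>UNIV. \<alpha> i) \<le> n"
      "p = (\<lambda>x. \<Sum>\<alpha>\<in>A. c \<alpha> * monomial \<alpha> x)"
    by (auto simp: polys_upto_def)
  have sub: "A \<subseteq> exponents_upto n" using A by (auto simp: exponents_upto_def)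
  have "(\<Sum>\<alpha>\<in>exponents_upto n. (if \<alpha> \<in> A then c \<alpha> else 0) * monomial \<alpha> x)
      = (\<Sum>\<alpha>\<in>A. c \<alpha> * monomial \<alpha> x)" for x
  proof -
    have "(\<Sum>\<alpha>\<in>exponents_upto n. (if \<alpha> \<in> A then c \<alpha> else 0) * monomial \<alpha> x)
        = (\<Sum>\<alpha>\<in>exponents_upto n. if \<alpha> \<in> A then c \<alpha> * monomial \<alpha> x else 0)"
      by (intro sum.cong) auto
    also have "\<dots> = (\<Sum>\<alpha>\<in>exponents_upto n \<inter> A. c \<alpha> * monomial \<alpha> x)"
      using sum.inter_restrict[OF finite_exponents_upto, of "\<lambda>\<alpha>. c \<alpha> * monomial \<alpha> x" n A] by simp
    also have "exponents_upto n \<inter> A = A" using sub by auto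
    finally show ?thesis .
  qed
  then show "\<exists>c. p = (\<lambda>x. \<Sum>\<alpha>\<in>exponents_upto n. c \<alpha> * monomial \<alpha> x)"
    using A(3) by (intro exI[of _ "\<lambda>\<alpha>. if \<alpha> \<in> A then c \<alpha> else 0"]) auto
next
  assume "\<exists>c. p = (\<lambda>x. \<Sum>\<alpha>\<in>exponents_upto n. c \<alpha> * monomial \<alpha> x)"
  then show "p \<in> polys_upto n" unfolding polys_upto_def using finite_exponents_upto
    by (auto simp: exponents_upto_def)
qed

lemma polys_upto_monomial:
  "(\<Sum>i\<in>UNIV. \<alpha> i) \<le> n \<Longrightarrow> (\<lambda>x. a * monomial \<alpha> x) \<in> polys_upto n"
  unfolding polys_upto_def by (intro CollectI exI[of _ "{\<alpha>}"] exI[of _ "\<lambda>_. a"]) auto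

lemma polys_upto_const: "(\<lambda>x. a) \<in> polys_upto n"
proof -
  have "(\<lambda>x. a * monomial (\<lambda>_. 0) x) \<in> polys_upto n" by (rule polys_upto_monomial) simp
  then show ?thesis by (simp add: monomial_def)
qed

lemma polys_upto_add: "p \<in> polys_upto n \<Longrightarrow> q \<in> polys_upto n \<Longrightarrow> (\<lambda>x. p x + q x) \<in> polys_upto n"
proof -
  assume "p \<in> polys_upto n" "q \<in> polys_upto n"
  then obtain c d where "p = (\<lambda>x. \<Sum>\<alpha>\<in>exponents_upto n. c \<alpha> * monomial \<alpha> x)"
      "q = (\<lambda>x. \<Sum>\<alpha>\<in>exponents_upto n. d \<alpha> * monomial \<alpha> x)"
    by (auto simp: polys_upto_iff)
  then show ?thesis unfolding polys_upto_iff
    by (intro exI[of _ "\<lambda>\<alpha>. c \<alpha> + d \<alpha>"]) (simp add: sum.distrib algebra_simps)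
qed

lemma polys_upto_sum:
  assumes "finite I" "\<forall>i\<in>I. P i \<in> polys_upto n"
  shows "(\<lambda>x. \<Sum>i\<in>I. P i x) \<in> polys_upto n"
  using assms
proof (induction I rule: finite_induct)
  case empty
  then show ?case using polys_upto_const[of 0] by simp
next
  case (insert a I)
  then show ?case using polys_upto_add[of "P a" n "\<lambda>x. \<Sum>i\<in>I. P i x"] by simp
qed

lemma monomial_mult: "monomial \<alpha> x * monomial \<beta> x = monomial (\<lambda>i. \<alpha> i + \<beta> i) x"
  by (simp add: monomial_def power_add prod.distrib)

lemma polys_upto_mult:
  fixes p q :: "real^'n::finite \<Rightarrow> real"
  assumes "p \<in> polys_upto a" "q \<in> polys_upto b"
  shows "(\<lambda>x. p x * q x) \<in> polys_upto (a + b)"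
proof -
  obtain c d where cd: "p = (\<lambda>x. \<Sum>\<alpha>\<in>exponents_upto a. c \<alpha> * monomial \<alpha> x)"
      "q = (\<lambda>x. \<Sum>\<alpha>\<in>exponents_upto b. d \<alpha> * monomial \<alpha> x)"
    using assms by (auto simp: polys_upto_iff)
  define t where "t \<alpha> \<beta> x = (c \<alpha> * d \<beta>) * monomial (\<lambda>i. \<alpha> i + \<beta> i) x" for \<alpha> \<beta> x
  have eq: "p x * q x = (\<Sum>\<alpha>\<in>exponents_upto a. \<Sum>\<beta>\<in>exponents_upto b. t \<alpha> \<beta> x)" for x
    unfolding cd sum_product t_def
    by (intro sum.cong refl) (simp add: monomial_mult[symmetric] algebra_simps)
  have "(\<lambda>x. \<Sum>\<alpha>\<in>exponents_upto a. \<Sum>\<beta>\<in>exponents_upto b. t \<alpha> \<beta> x) \<in> polys_upto (a + b)"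
  proof (intro polys_upto_sum[OF finite_exponents_upto] ballI)
    fix \<alpha> \<beta> :: "'n \<Rightarrow> nat" assume "\<alpha> \<in> exponents_upto a" "\<beta> \<in> exponents_upto b"
    then have "(\<Sum>i\<in>UNIV. \<alpha> i + \<beta> i) \<le> a + b" by (simp add: exponents_upto_def sum.distrib)
    then show "t \<alpha> \<beta> \<in> polys_upto (a + b)" unfolding t_def by (rule polys_upto_monomial)
  qed
  then show ?thesis using eq by simp
qed

lemma polys_upto_mono: "n \<le> n' \<Longrightarrow> p \<in> polys_upto n \<Longrightarrow> p \<in> polys_upto n'"
  unfolding polys_upto_def by fastforce

lemma polys_upto_inner: "(\<lambda>y. x \<bullet> y) \<in> polys_upto 1"
proof -
  have coord: "(\<lambda>y. x $ i * monomial (\<lambda>j. if j = i then 1 else 0) y) \<in> polys_upto 1" for i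
    by (rule polys_upto_monomial) simp
  have me: "monomial (\<lambda>j. if j = i then 1 else 0) y = y $ i" for i and y :: "real^'n"
  proof -
    have "monomial (\<lambda>j. if j = i then 1 else 0) y = (\<Prod>j\<in>UNIV. if j = i then y $ j else 1)"
      unfolding monomial_def by (intro prod.cong) auto
    also have "\<dots> = y $ i" by simp
    finally show ?thesis .
  qed
  have "(\<lambda>y. \<Sum>i\<in>UNIV. x $ i * monomial (\<lambda>j. if j = i then 1 else 0) y) = (\<lambda>y. x \<bullet> y)"
    by (intro ext) (simp only: me inner_vec_def inner_real_def)
  moreover have "(\<lambda>y. \<Sum>i\<in>UNIV. x $ i * monomial (\<lambda>j. if j = i then 1 else 0) y) \<in> polys_upto 1"
    using coord by (intro polys_upto_sum) auto
  ultimately show ?thesis by simp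
qed

lemma polys_upto_inner_power: "(\<lambda>y. (x \<bullet> y) ^ k) \<in> polys_upto k"
proof (induction k)
  case 0 then show ?case using polys_upto_const[of 1 0] by simp
next
  case (Suc k)
  then show ?case using polys_upto_mult[OF polys_upto_inner[of x] Suc.IH] by simp
qed

lemma polys_upto_poly_inner:
  assumes "degree r \<le> n"
  shows "(\<lambda>y. poly r (x \<bullet> y)) \<in> polys_upto n"
proof -
  have "(\<lambda>y. \<Sum>k\<le>degree r. coeff r k * (x \<bullet> y) ^ k) \<in> polys_upto n"
  proof (intro polys_upto_sum ballI)
    fix k assume "k \<in> {..degree r}"
    then have "k \<le> n" using assms by simp
    have "(\<lambda>y. (x \<bullet> y) ^ k * coeff r k) \<in> polys_upto (k + 0)"
      by (rule polys_upto_mult[OF polys_upto_inner_power polys_upto_const])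
    then show "(\<lambda>y. coeff r k * (x \<bullet> y) ^ k) \<in> polys_upto n"
      using polys_upto_mono[OF \<open>k \<le> n\<close>] by (simp add: mult.commute)
  qed simp
  then show ?thesis by (simp add: poly_altdef)
qed

section \<open>Rotation invariance of the sphere average\<close>

text \<open>The change-of-variables theorem for linear maps is only available for index types of class
  \<open>wellorder\<close>, so integrals over \<open>real^'n\<close> are transported to \<open>real^'n idx\<close>, a copy of
  \<open>{..<CARD('n)}\<close>, along a bijection of the coordinates.\<close>

typedef ('n::finite) idx = "{..<CARD('n)}"
  by (rule exI[of _ 0]) simp

instance idx :: (finite) finite
proof
  have "(UNIV :: 'a idx set) \<subseteq> Abs_idx ` {..<CARD('a)}"
    by (metis Rep_idx Rep_idx_inverse image_eqI subsetI)
  then show "finite (UNIV :: 'a idx set)" by (metis finite_imageI finite_lessThan finite_subset)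
qed

instantiation idx :: (finite) linorder
begin
definition less_eq_idx :: "'a idx \<Rightarrow> 'a idx \<Rightarrow> bool" where "less_eq_idx x y \<longleftrightarrow> Rep_idx x \<le> Rep_idx y"
definition less_idx :: "'a idx \<Rightarrow> 'a idx \<Rightarrow> bool" where "less_idx x y \<longleftrightarrow> Rep_idx x < Rep_idx y"
instance
  by standard (auto simp: less_eq_idx_def less_idx_def Rep_idx_inject[symmetric])
end

instance idx :: (finite) wellorder
proof
  fix P :: "'a idx \<Rightarrow> bool" and a
  assume H: "\<And>x. (\<And>y. y < x \<Longrightarrow> P y) \<Longrightarrow> P x"
  show "P a"
    by (induction a rule: measure_induct_rule[where f=Rep_idx]) (rule H, simp add: less_idx_def)
qed

lemma card_idx: "CARD('n idx) = CARD('n::finite)"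
  using type_definition.card[OF type_definition_idx] by simp

definition to_idx :: "'n::finite \<Rightarrow> 'n idx" where "to_idx = (SOME h. bij h)"

lemma bij_to_idx: "bij (to_idx :: 'n::finite \<Rightarrow> 'n idx)"
proof -
  have "\<exists>h :: 'n \<Rightarrow> 'n idx. bij_betw h UNIV UNIV"
    by (rule finite_same_card_bij) (auto simp: card_idx)
  then show ?thesis unfolding to_idx_def by (metis someI_ex)
qed

definition vec_to_idx :: "real^'n::finite \<Rightarrow> real^'n idx" where
  "vec_to_idx x = (\<chi> j. x $ inv to_idx j)"

definition vec_from_idx :: "real^'n::finite idx \<Rightarrow> real^'n" where
  "vec_from_idx y = (\<chi> i. y $ to_idx i)"

lemma to_idx_inv: "to_idx (inv to_idx j) = j"
  by (metis bij_to_idx bij_inv_eq_iff)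

lemma inv_to_idx: "inv to_idx (to_idx i) = i"
  by (metis bij_to_idx bij_inv_eq_iff)

lemma vec_to_idx_from_idx: "vec_to_idx (vec_from_idx y) = y"
  by (simp add: vec_to_idx_def vec_from_idx_def vec_eq_iff to_idx_inv)

lemma vec_from_idx_to_idx: "vec_from_idx (vec_to_idx x) = x"
  by (simp add: vec_to_idx_def vec_from_idx_def vec_eq_iff inv_to_idx)

lemma vec_from_idx_nth: "vec_from_idx y $ i = y $ to_idx i" by (simp add: vec_from_idx_def)

lemma linear_vec_from_idx: "linear vec_from_idx"
  by (intro linearI) (simp_all add: vec_from_idx_def vec_eq_iff)

lemma linear_vec_to_idx: "linear vec_to_idx"
  by (intro linearI) (simp_all add: vec_to_idx_def vec_eq_iff)

lemma inner_vec_from_idx: "vec_from_idx x \<bullet> vec_from_idx y = x \<bullet> y"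
proof -
  have "vec_from_idx x \<bullet> vec_from_idx y = (\<Sum>i\<in>UNIV. x $ to_idx i * y $ to_idx i)"
    by (simp add: inner_vec_def vec_from_idx_def)
  also have "\<dots> = (\<Sum>j\<in>UNIV. x $ j * y $ j)"
    using sum.reindex_bij_betw[OF bij_to_idx, of "\<lambda>j. x $ j * y $ j"] by simp
  also have "\<dots> = x \<bullet> y" by (simp add: inner_vec_def)
  finally show ?thesis .
qed

lemma norm_vec_from_idx: "norm (vec_from_idx x) = norm x"
  using inner_vec_from_idx[of x x] by (simp add: norm_eq_sqrt_inner)

lemma inner_vec_to_idx: "vec_to_idx x \<bullet> vec_to_idx y = x \<bullet> y"
  using inner_vec_from_idx[of "vec_to_idx x" "vec_to_idx y"] by (simp add: vec_from_idx_to_idx)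

lemma vec_from_idx_cbox: "vec_from_idx ` cbox u v = cbox (vec_from_idx u) (vec_from_idx v)"
proof
  show "vec_from_idx ` cbox u v \<subseteq> cbox (vec_from_idx u) (vec_from_idx v)"
    by (auto simp: mem_box_cart vec_from_idx_nth)
  show "cbox (vec_from_idx u) (vec_from_idx v) \<subseteq> vec_from_idx ` cbox u v"
  proof
    fix x assume x: "x \<in> cbox (vec_from_idx u) (vec_from_idx v)"
    have "vec_to_idx x \<in> cbox u v"
    proof -
      have "u $ j \<le> vec_to_idx x $ j \<and> vec_to_idx x $ j \<le> v $ j" for j
        using x[unfolded mem_box_cart, rule_format, of "inv to_idx j"]
        by (simp add: vec_from_idx_nth vec_to_idx_def to_idx_inv)
      then show ?thesis by (simp add: mem_box_cart)
    qed
    then show "x \<in> vec_from_idx ` cbox u v" using vec_from_idx_to_idx[of x] by force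
  qed
qed

lemma vec_to_idx_cbox: "vec_to_idx ` cbox u v = cbox (vec_to_idx u) (vec_to_idx v)"
proof -
  have "vec_to_idx ` cbox u v = vec_to_idx ` vec_from_idx ` cbox (vec_to_idx u) (vec_to_idx v)"
    by (simp add: vec_from_idx_cbox vec_from_idx_to_idx)
  also have "\<dots> = cbox (vec_to_idx u) (vec_to_idx v)"
    by (simp add: image_comp o_def vec_to_idx_from_idx)
  finally show ?thesis .
qed

lemma content_vec_from_idx_cbox:
  "Henstock_Kurzweil_Integration.content (vec_from_idx ` cbox u v) =
     Henstock_Kurzweil_Integration.content (cbox u v)"
proof (cases "cbox u v = {}")
  case True then show ?thesis by simp
next
  case False
  then have ne: "cbox (vec_from_idx u) (vec_from_idx v) \<noteq> {}"
    by (simp add: vec_from_idx_cbox[symmetric])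
  have "Henstock_Kurzweil_Integration.content (vec_from_idx ` cbox u v)
      = (\<Prod>i\<in>UNIV. v $ to_idx i - u $ to_idx i)"
    using ne by (simp add: vec_from_idx_cbox content_cbox_cart vec_from_idx_nth)
  also have "\<dots> = (\<Prod>j\<in>UNIV. v $ j - u $ j)"
    using prod.reindex_bij_betw[OF bij_to_idx, of "\<lambda>j. v $ j - u $ j"] by simp
  also have "\<dots> = Henstock_Kurzweil_Integration.content (cbox u v)"
    using False by (simp add: content_cbox_cart)
  finally show ?thesis .
qed

lemma cball_vec_from_idx: "vec_from_idx y \<in> cball 0 1 \<longleftrightarrow> y \<in> cball 0 1"
  by (simp add: norm_vec_from_idx)

lemma cball_subset_cbox: "cball (0::real^'m::finite) 1 \<subseteq> cbox (- 1) 1"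
proof
  fix x :: "real^'m" assume "x \<in> cball 0 1"
  then have "norm x \<le> 1" by simp
  then have "\<bar>x $ i\<bar> \<le> 1" for i using component_le_norm_cart[of x i] by linarith
  then show "x \<in> cbox (- 1) 1" by (auto simp: mem_box_cart abs_le_iff)
qed

lemma vec_to_idx_one: "vec_to_idx (1::real^'n::finite) = 1" "vec_to_idx (- 1::real^'n) = - 1"
  by (simp_all add: vec_to_idx_def vec_eq_iff)

lemma has_integral_vec_from_idx:
  fixes F :: "real^'n::finite \<Rightarrow> real"
  assumes "(F has_integral i) (cball 0 1)"
  shows "((\<lambda>y. F (vec_from_idx y)) has_integral i) (cball 0 1)"
proof -
  let ?F0 = "\<lambda>x. if x \<in> cball (0::real^'n) 1 then F x else 0"
  have "(?F0 has_integral i) (cbox (-1) 1)"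
    using has_integral_restrict[OF cball_subset_cbox] assms by blast
  then have "((\<lambda>y. ?F0 (vec_from_idx y)) has_integral (1/1) *\<^sub>R i) (vec_to_idx ` cbox (-1) 1)"
  proof (rule has_integral_twiddle[where g=vec_from_idx and h=vec_to_idx and r=1, rotated -1])
    show "vec_to_idx (vec_from_idx x) = x" for x by (rule vec_to_idx_from_idx)
    show "vec_from_idx (vec_to_idx x) = x" for x by (rule vec_from_idx_to_idx)
    show "continuous (at x) vec_from_idx" for x
      by (rule linear_continuous_at)
        (simp add: linear_vec_from_idx flip: linear_conv_bounded_linear)
    show "\<exists>w z. vec_from_idx ` cbox u v = cbox w z" for u v by (auto simp: vec_from_idx_cbox)
    show "\<exists>w z. vec_to_idx ` cbox u v = cbox w z" for u v by (auto simp: vec_to_idx_cbox)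
    show "Henstock_Kurzweil_Integration.content (vec_from_idx ` cbox u v) =
        1 * Henstock_Kurzweil_Integration.content (cbox u v)" for u v
      by (simp add: content_vec_from_idx_cbox)
  qed simp
  then have "((\<lambda>y. if y \<in> cball 0 1 then F (vec_from_idx y) else 0) has_integral i) (cbox (-1) 1)"
    by (simp add: vec_to_idx_cbox vec_to_idx_one cball_vec_from_idx norm_vec_from_idx)
  then show ?thesis using has_integral_restrict[OF cball_subset_cbox] by blast
qed

lemma absolutely_integrable_radial_projection:
  fixes p :: "'a::euclidean_space \<Rightarrow> real"
  assumes p: "continuous_on UNIV p"
  shows "(\<lambda>z. p (z /\<^sub>R norm z)) absolutely_integrable_on cball 0 1"
proof -
  have "compact (p ` cball 0 1)" by (intro compact_continuous_image continuous_on_subset[OF p]) auto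
  then obtain B where B: "\<forall>y\<in>p ` cball 0 1. norm y \<le> B" using compact_imp_bounded bounded_iff
    by metis
  have nb: "norm (p (z /\<^sub>R norm z)) \<le> B" for z
  proof -
    have "norm (z /\<^sub>R norm z) \<le> 1" by (cases "z = 0") auto
    then show ?thesis using B by auto
  qed
  have "(\<lambda>z::'a. z /\<^sub>R norm z) \<in> borel_measurable borel" by measurable
  then have "(\<lambda>z. p (z /\<^sub>R norm z)) \<in> borel_measurable borel"
    by (rule borel_measurable_continuous_on[where f=p, OF p])
  then have meas: "(\<lambda>z. p (z /\<^sub>R norm z)) \<in> borel_measurable (lebesgue_on (cball 0 1))"
    by (simp add: measurable_completion measurable_restrict_space1)
  show ?thesis
  proof (rule measurable_bounded_by_integrable_imp_absolutely_integrable[OF meas])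
    show "cball 0 1 \<in> sets lebesgue" by simp
    show "(\<lambda>_. B) integrable_on cball (0::'a) 1" by (intro integrable_on_const) simp
    show "norm (p (x /\<^sub>R norm x)) \<le> B" for x by (rule nb)
  qed
qed

lemma integral_cball_orthogonal_transformation:
  fixes H :: "real^'m::{finite,wellorder} \<Rightarrow> real"
    and T :: "real^'m::{finite,wellorder} \<Rightarrow> real^'m::{finite,wellorder}"
  assumes T: "orthogonal_transformation T" and H: "H absolutely_integrable_on cball 0 1"
  shows "integral (cball 0 1) (\<lambda>z. H (T z)) = integral (cball 0 1) H"
proof -
  \<comment> \<open>change of variables is stated for functions with values in some \<open>real^'k\<close>\<close>
  define H1 where "H1 = (\<lambda>z. (vec (H z) :: real^1))"
  have H1i: "H1 absolutely_integrable_on cball 0 1"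
  proof (rule absolutely_integrable_componentwise_iff[THEN iffD2], rule ballI)
    fix b :: "real^1" assume "b \<in> Basis"
    then obtain i u where "b = axis i u" "u \<in> Basis" by (auto simp: Basis_vec_def)
    then have "b = axis i 1" by simp
    then have "(\<lambda>x. H1 x \<bullet> b) = H" by (simp add: H1_def inner_axis)
    then show "(\<lambda>x. H1 x \<bullet> b) absolutely_integrable_on cball 0 1" using H by simp
  qed
  have lin: "linear T" using T by (rule orthogonal_transformation_linear)
  have img: "T ` cball 0 1 = cball 0 1"
    using image_orthogonal_transformation_cball[OF T, of 0 1] linear_0[OF lin] by simp
  have det: "\<bar>det (matrix T)\<bar> = 1"
    using det_orthogonal_matrix T by (auto simp: orthogonal_transformation_matrix)
  have "integral (T ` cball 0 1) H1 = \<bar>det (matrix T)\<bar> *\<^sub>R integral (cball 0 1) (H1 \<circ> T)"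
    by (rule integral_change_of_variables_linear[OF lin]) (simp add: img H1i)
  then have eq: "integral (cball 0 1) H1 = integral (cball 0 1) (H1 \<circ> T)" using img det by simp
  have "(\<lambda>x. \<bar>det (matrix T)\<bar> *\<^sub>R H1 (T x)) absolutely_integrable_on cball 0 1"
    using absolutely_integrable_change_of_variables_linear[OF lin, where f=H1 and S="cball 0 1"]
      img H1i by simp
  then have H1Ti: "(H1 \<circ> T) integrable_on cball 0 1" using det
    by (simp add: o_def absolutely_integrable_on_def)
  have H1int: "H1 integrable_on cball 0 1" using H1i by (simp add: absolutely_integrable_on_def)
  have "integral (cball 0 1) (\<lambda>z. H (T z)) = integral (cball 0 1) (\<lambda>z. (H1 \<circ> T) z $ 1)"
    by (simp add: H1_def)
  also have "\<dots> = integral (cball 0 1) (H1 \<circ> T) $ 1" by (rule integral_component_eq_cart[OF H1Ti])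
  also have "\<dots> = integral (cball 0 1) H1 $ 1" using eq by simp
  also have "\<dots> = integral (cball 0 1) (\<lambda>z. H1 z $ 1)"
    by (rule integral_component_eq_cart[OF H1int, symmetric])
  also have "\<dots> = integral (cball 0 1) H" by (simp add: H1_def)
  finally show ?thesis .
qed

lemma integral_vec_from_idx:
  fixes g :: "real^'n::finite \<Rightarrow> real"
  assumes "g integrable_on cball 0 1"
  shows "integral (cball 0 1) (\<lambda>y. g (vec_from_idx y)) = integral (cball 0 1) g"
  using has_integral_vec_from_idx[OF integrable_integral[OF assms]] by (rule integral_unique)

lemma sphere_avg_orthogonal_transformation:
  fixes p :: "real^'n::finite \<Rightarrow> real" and T :: "real^'n \<Rightarrow> real^'n"
  assumes p: "continuous_on UNIV p" and T: "orthogonal_transformation T"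
  shows "sphere_avg (\<lambda>y. p (T y)) = sphere_avg p"
proof -
  have lin: "linear T" using T by (rule orthogonal_transformation_linear)
  have T_radial: "T (z /\<^sub>R norm z) = T z /\<^sub>R norm (T z)" for z
    using linear_cmul[OF lin] orthogonal_transformation_norm[OF T] by simp
  have pT: "continuous_on UNIV (p \<circ> T)"
    by (intro continuous_on_compose linear_continuous_on continuous_on_subset[OF p])
       (auto simp: lin linear_conv_bounded_linear[symmetric])
  have radial: "(\<lambda>z. q (z /\<^sub>R norm z)) integrable_on cball 0 1"
    if "continuous_on UNIV q" for q :: "real^'n \<Rightarrow> real"
    using absolutely_integrable_radial_projection[OF that]
    by (simp add: absolutely_integrable_on_def)
  define T' where "T' = (\<lambda>y. vec_to_idx (T (vec_from_idx y)))"
  have T': "orthogonal_transformation T'"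
    unfolding orthogonal_transformation_def
  proof
    show "linear T'" unfolding T'_def
      using linear_compose[OF linear_compose[OF linear_vec_from_idx lin] linear_vec_to_idx]
      by (simp add: o_def)
    show "\<forall>v w. T' v \<bullet> T' w = v \<bullet> w"
      using T
      by (simp add: T'_def inner_vec_to_idx inner_vec_from_idx orthogonal_transformation_def)
  qed
  define H where "H = (\<lambda>y. p (vec_from_idx y /\<^sub>R norm (vec_from_idx y)))"
  have "H = (\<lambda>y. (p \<circ> vec_from_idx) (y /\<^sub>R norm y))"
    by (simp add: H_def norm_vec_from_idx linear_cmul[OF linear_vec_from_idx])
  moreover have "continuous_on UNIV (p \<circ> vec_from_idx)"
    by (intro continuous_on_compose linear_continuous_on continuous_on_subset[OF p])
       (auto simp: linear_vec_from_idx linear_conv_bounded_linear[symmetric])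
  ultimately have H: "H absolutely_integrable_on cball 0 1"
    using absolutely_integrable_radial_projection by metis
  have "integral (cball 0 1) (\<lambda>z. (p \<circ> T) (z /\<^sub>R norm z))
      = integral (cball 0 1) (\<lambda>y. (p \<circ> T) (vec_from_idx y /\<^sub>R norm (vec_from_idx y)))"
    by (rule integral_vec_from_idx[OF radial[OF pT], symmetric])
  also have "\<dots> = integral (cball 0 1) (\<lambda>y. H (T' y))"
    by (simp add: H_def T'_def vec_from_idx_to_idx T_radial)
  also have "\<dots> = integral (cball 0 1) H"
    by (rule integral_cball_orthogonal_transformation[OF T' H])
  also have "\<dots> = integral (cball 0 1) (\<lambda>z. p (z /\<^sub>R norm z))"
    unfolding H_def by (rule integral_vec_from_idx[OF radial[OF p]])
  finally show ?thesis by (simp add: sphere_avg_def)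
qed

lemma sphere_avg_zonal_eq:
  fixes x x' :: "real^'n::finite" and g :: "real \<Rightarrow> real"
  assumes g: "continuous_on UNIV g" and x: "norm x = 1" "norm x' = 1"
  shows "sphere_avg (\<lambda>y. g (x \<bullet> y)) = sphere_avg (\<lambda>y. g (x' \<bullet> y))"
proof -
  obtain T where T: "orthogonal_transformation T" "T x' = x"
    using orthogonal_transformation_exists[of x' x] x by auto
  have "continuous_on UNIV (\<lambda>y. g (x \<bullet> y))"
    by (intro continuous_on_compose2[OF g] continuous_intros) auto
  then have "sphere_avg (\<lambda>y. g (x \<bullet> T y)) = sphere_avg (\<lambda>y. g (x \<bullet> y))"
    by (rule sphere_avg_orthogonal_transformation[OF _ T(1)])
  moreover have "x \<bullet> T y = x' \<bullet> y" for y
    using T by (simp add: orthogonal_transformation_def flip: T(2))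
  ultimately show ?thesis by simp
qed

lemma spherical_design_zonal_sum_eq:
  fixes x x' :: "real^'n::finite" and r :: "real poly"
  assumes D: "spherical_design n \<omega>" and r: "degree r \<le> n" and x: "norm x = 1" "norm x' = 1"
  shows "(\<Sum>y\<in>\<omega>. poly r (x \<bullet> y)) = (\<Sum>y\<in>\<omega>. poly r (x' \<bullet> y))"
proof -
  have card: "real (card \<omega>) > 0" using D by (auto simp: spherical_design_def card_gt_0_iff)
  have avg: "(\<Sum>y\<in>\<omega>. poly r (z \<bullet> y)) = real (card \<omega>) * sphere_avg (\<lambda>y. poly r (z \<bullet> y))" for z
  proof -
    have "(\<Sum>y\<in>\<omega>. poly r (z \<bullet> y)) / real (card \<omega>) = sphere_avg (\<lambda>y. poly r (z \<bullet> y))"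
      using D polys_upto_poly_inner[OF r, of z] by (auto simp: spherical_design_def)
    then show ?thesis using card by (simp add: field_simps)
  qed
  have "continuous_on UNIV (poly r)" by (intro continuous_intros)
  then show ?thesis using avg sphere_avg_zonal_eq[OF _ x] by metis
qed

section \<open>Potentials of spherical designs\<close>

lemma norm_diff_sq_unit:
  fixes x y :: "'a::real_inner"
  assumes "norm x = 1" "norm y = 1"
  shows "(norm (x - y))\<^sup>2 = 2 - 2 * (x \<bullet> y)"
proof -
  have "(norm (x - y))\<^sup>2 = x \<bullet> x + y \<bullet> y - 2 * (x \<bullet> y)"
    by (simp add: power2_norm_eq_inner inner_diff_left inner_diff_right inner_commute)
  then show ?thesis using assms by (simp add: dot_square_norm)
qed

lemma unit_dist_sq_mem_image_iff:
  fixes y z :: "'a::real_inner"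
  assumes "norm y = 1" "norm z = 1"
  shows "(norm (y - z))\<^sup>2 \<in> (\<lambda>t. 2 - 2 * t) ` S \<longleftrightarrow> y \<bullet> z \<in> S"
proof -
  have "inj (\<lambda>t::real. 2 - 2 * t)" by (auto intro: injI)
  then show ?thesis unfolding norm_diff_sq_unit[OF assms] by (rule inj_image_mem_iff)
qed

lemma norm_diff_sq_unit_le_4:
  fixes x y :: "'a::real_inner"
  assumes "norm x = 1" "norm y = 1"
  shows "(norm (x - y))\<^sup>2 \<in> {0..4}"
proof -
  have "norm (x - y) \<le> 2" using norm_triangle_ineq4[of x y] assms by simp
  then show ?thesis using power_mono[of "norm (x - y)" 2 2] by simp
qed

lemma unit_inner_eq_pm1:
  fixes x y :: "'a::real_inner"
  assumes "norm x = 1" "norm y = 1" "\<bar>x \<bullet> y\<bar> = 1"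
  shows "y = x \<or> y = - x"
  using norm_cauchy_schwarz_abs_eq[of x y] assms by simp

lemma spherical_design_potential_poly_eq:
  fixes \<omega> :: "(real^'n::finite) set" and Q :: "real poly"
  assumes D: "spherical_design n \<omega>" and Q: "degree Q \<le> n" and x: "norm x = 1" "norm x' = 1"
  shows "potential (poly Q) \<omega> x = potential (poly Q) \<omega> x'"
proof -
  define R where "R = Q \<circ>\<^sub>p [:2, -2:]"
  have R: "degree R \<le> n" using Q by (simp add: R_def degree_pcompose)
  have "potential (poly Q) \<omega> z = (\<Sum>y\<in>\<omega>. poly R (z \<bullet> y))" if "norm z = 1" for z
    unfolding potential_def
  proof (rule sum.cong[OF refl])
    fix y assume "y \<in> \<omega>"
    then have "norm y = 1" using D by (auto simp: spherical_design_def)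
    then show "poly Q ((norm (z - y))\<^sup>2) = poly R (z \<bullet> y)"
      using that by (simp add: R_def poly_pcompose norm_diff_sq_unit algebra_simps)
  qed
  then show ?thesis using spherical_design_zonal_sum_eq[OF D R x] x by simp
qed

context
  fixes f :: "real \<Rightarrow> real" and Q :: "real poly" and n :: nat and \<omega> :: "(real^'n::finite) set"
  assumes D: "spherical_design n \<omega>" and Q: "degree Q \<le> n"
    and maj: "\<forall>t\<in>{0..4}. f t \<le> poly Q t"
    and eq: "\<forall>y\<in>\<omega>. \<forall>z\<in>\<omega>. f ((norm (y - z))\<^sup>2) = poly Q ((norm (y - z))\<^sup>2)"
begin

lemma potential_le_potential_poly:
  assumes x: "norm x = 1"
  shows "potential f \<omega> x \<le> potential (poly Q) \<omega> x"
  unfolding potential_def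
proof (rule sum_mono)
  fix z assume "z \<in> \<omega>"
  then have "norm z = 1" using D by (auto simp: spherical_design_def)
  then show "f ((norm (x - z))\<^sup>2) \<le> poly Q ((norm (x - z))\<^sup>2)"
    using maj norm_diff_sq_unit_le_4[OF x] by blast
qed

lemma potential_eq_potential_poly:
  assumes "y \<in> \<omega>"
  shows "potential f \<omega> y = potential (poly Q) \<omega> y"
  unfolding potential_def using assms eq by (intro sum.cong) auto

lemma potential_le_at_design_point:
  assumes "norm x = 1" "y \<in> \<omega>"
  shows "potential f \<omega> x \<le> potential f \<omega> y"
proof -
  have "norm y = 1" using D assms(2) by (auto simp: spherical_design_def)
  then show ?thesis
    using potential_le_potential_poly[OF assms(1)] potential_eq_potential_poly[OF assms(2)]
      spherical_design_potential_poly_eq[OF D Q assms(1)] by simp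
qed

lemma potential_max_dist_sq_in_nodes:
  assumes strict: "\<forall>t\<in>{0..4} - N. f t < poly Q t"
    and x: "norm x = 1" and y: "y \<in> \<omega>" and max: "potential f \<omega> y \<le> potential f \<omega> x"
  shows "\<forall>z\<in>\<omega>. (norm (x - z))\<^sup>2 \<in> N"
proof -
  have fin: "finite \<omega>" and sph: "\<And>z. z \<in> \<omega> \<Longrightarrow> norm z = 1"
    using D by (auto simp: spherical_design_def)
  define gap where "gap z = poly Q ((norm (x - z))\<^sup>2) - f ((norm (x - z))\<^sup>2)" for z
  have gap_nonneg: "\<forall>z\<in>\<omega>. gap z \<ge> 0"
    using maj norm_diff_sq_unit_le_4[OF x] sph by (auto simp: gap_def)
  have "potential (poly Q) \<omega> x = potential f \<omega> y"
    using potential_eq_potential_poly[OF y] spherical_design_potential_poly_eq[OF D Q x sph[OF y]]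
    by simp
  moreover have "(\<Sum>z\<in>\<omega>. gap z) = potential (poly Q) \<omega> x - potential f \<omega> x"
    by (simp add: gap_def potential_def sum_subtractf)
  moreover have "(\<Sum>z\<in>\<omega>. gap z) \<ge> 0" using gap_nonneg by (simp add: sum_nonneg)
  ultimately have "(\<Sum>z\<in>\<omega>. gap z) = 0" using max by linarith
  then have gap_0: "\<forall>z\<in>\<omega>. gap z = 0" using sum_nonneg_eq_0_iff[OF fin] gap_nonneg by blast
  show ?thesis
  proof
    fix z assume z: "z \<in> \<omega>"
    have "\<not> f ((norm (x - z))\<^sup>2) < poly Q ((norm (x - z))\<^sup>2)"
      using gap_0 z by (simp add: gap_def)
    then show "(norm (x - z))\<^sup>2 \<in> N"
      using strict norm_diff_sq_unit_le_4[OF x sph[OF z]] by blast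
  qed
qed

end

section \<open>Antipodal sharp configurations\<close>

definition inner_products :: "(real^'n::finite) set \<Rightarrow> real set" where
  "inner_products \<omega> = {x \<bullet> y | x y. x \<in> \<omega> \<and> y \<in> \<omega> \<and> x \<noteq> y}"

lemma finite_inner_products: "finite \<omega> \<Longrightarrow> finite (inner_products \<omega>)"
proof -
  assume "finite \<omega>"
  moreover have "inner_products \<omega> \<subseteq> (\<lambda>(x, y). x \<bullet> y) ` (\<omega> \<times> \<omega>)"
    by (auto simp: inner_products_def)
  ultimately show ?thesis by (meson finite_SigmaI finite_imageI finite_subset)
qed

lemma inner_products_subset:
  assumes "\<omega> \<subseteq> sphere 0 1"
  shows "inner_products \<omega> \<subseteq> {-1..<1}"
proof
  fix t assume "t \<in> inner_products \<omega>"
  then obtain x y where xy: "t = x \<bullet> y" "x \<in> \<omega>" "y \<in> \<omega>" "x \<noteq> y"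
    by (auto simp: inner_products_def)
  then have "norm x = 1" "norm y = 1" using assms by auto
  moreover have "t \<noteq> 1"
  proof
    assume "t = 1"
    then have "y = x \<or> y = - x" using unit_inner_eq_pm1[of x y] xy \<open>norm x = 1\<close> \<open>norm y = 1\<close> by simp
    then show False using xy \<open>t = 1\<close> \<open>norm x = 1\<close> by (auto simp: dot_square_norm)
  qed
  ultimately show "t \<in> {-1..<1}" using xy Cauchy_Schwarz_ineq2[of x y] by auto
qed

lemma minus_one_in_inner_products:
  assumes "\<omega> \<subseteq> sphere 0 1" "\<omega> \<noteq> {}" "antipodal \<omega>"
  shows "-1 \<in> inner_products \<omega>"
proof -
  obtain x where x: "x \<in> \<omega>" using assms(2) by auto
  then have "norm x = 1" "- x \<in> \<omega>" using assms by (auto simp: antipodal_def)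
  moreover have "x \<noteq> 0" using \<open>norm x = 1\<close> by auto
  then have "x \<noteq> - x" by (auto simp: vec_eq_iff)
  moreover have "x \<bullet> - x = -1" using \<open>norm x = 1\<close> by (simp add: dot_square_norm)
  ultimately have "-1 = x \<bullet> - x \<and> x \<in> \<omega> \<and> - x \<in> \<omega> \<and> x \<noteq> - x" using x by simp
  then show ?thesis unfolding inner_products_def by blast
qed

lemma spherical_design_inner_notin:
  fixes \<omega> :: "(real^'n::finite) set"
  assumes D: "spherical_design n \<omega>" and A: "finite A" "2 * card A \<le> n" "1 \<notin> A"
    and x: "norm x = 1"
  shows "\<exists>y\<in>\<omega>. x \<bullet> y \<notin> A"
proof (rule ccontr)
  assume "\<not> ?thesis"
  then have all: "\<forall>z\<in>\<omega>. x \<bullet> z \<in> A" by blast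
  define h where "h = (node_poly A)\<^sup>2"
  have h: "degree h \<le> n" using A
    by (simp add: h_def degree_power_eq node_poly_nonzero degree_node_poly)
  have fin: "finite \<omega>" and "\<omega> \<noteq> {}" "\<omega> \<subseteq> sphere 0 1"
    using D by (simp_all add: spherical_design_def)
  then obtain y where y: "y \<in> \<omega>" "norm y = 1" by (auto simp: subset_iff)
  have "(\<Sum>z\<in>\<omega>. poly h (x \<bullet> z)) = 0"
    using all A(1) by (auto simp: h_def poly_node_poly_eq_0)
  moreover have "poly h (y \<bullet> y) \<le> (\<Sum>z\<in>\<omega>. poly h (y \<bullet> z))"
    using fin y by (intro member_le_sum) (auto simp: h_def)
  moreover have "poly h (y \<bullet> y) > 0"
    using A y by (auto simp: h_def dot_square_norm poly_node_poly)
  ultimately show False using spherical_design_zonal_sum_eq[OF D h x y(2)] by simp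
qed

lemma antipodal_sharp_config_inner_products:
  fixes \<omega> :: "(real^'n::finite) set"
  assumes "sharp_config m \<omega>" "antipodal \<omega>"
  obtains A where "finite A" "card A = m - 1" "A \<subseteq> {-1<..<1}"
    "\<forall>y\<in>\<omega>. \<forall>z\<in>\<omega>. y \<bullet> z \<in> insert 1 (insert (-1) A)"
proof -
  have card: "card (inner_products \<omega>) = m" and D: "spherical_design (2 * m - 1) \<omega>"
    using assms(1) by (auto simp: sharp_config_def inner_products_def)
  then have \<omega>: "finite \<omega>" "\<omega> \<noteq> {}" "\<omega> \<subseteq> sphere 0 1" by (auto simp: spherical_design_def)
  have "y \<bullet> z \<in> insert 1 (inner_products \<omega>)" if "y \<in> \<omega>" "z \<in> \<omega>" for y z
    using that \<omega>(3) by (cases "y = z") (auto simp: inner_products_def dot_square_norm)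
  moreover have "-1 \<in> inner_products \<omega>" by (rule minus_one_in_inner_products[OF \<omega>(3,2) assms(2)])
  ultimately show thesis
    using that[of "inner_products \<omega> - {-1}"] finite_inner_products[OF \<omega>(1)] card
      inner_products_subset[OF \<omega>(3)]
    by fastforce
qed

lemma antipodal_design_mem_of_inner_products:
  fixes \<omega> :: "(real^'n::finite) set"
  assumes D: "spherical_design n \<omega>" and "antipodal \<omega>"
    and A: "finite A" "2 * card A \<le> n" "1 \<notin> A"
    and x: "norm x = 1" and inner: "\<forall>z\<in>\<omega>. x \<bullet> z \<in> insert 1 (insert (-1) A)"
  shows "x \<in> \<omega>"
proof (rule ccontr)
  assume "x \<notin> \<omega>"
  have "x \<bullet> z \<in> A" if "z \<in> \<omega>" for z
  proof -
    have "norm z = 1" using D that by (auto simp: spherical_design_def)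
    then have "\<bar>x \<bullet> z\<bar> = 1 \<Longrightarrow> x = z \<or> x = - z"
      using unit_inner_eq_pm1[of z x] x by (simp add: inner_commute)
    moreover have "- z \<in> \<omega>" using \<open>antipodal \<omega>\<close> that by (simp add: antipodal_def)
    ultimately show ?thesis using inner that \<open>x \<notin> \<omega>\<close> by force
  qed
  then show False using spherical_design_inner_notin[OF D A x] by blast
qed

theorem theorem2p4:
  fixes f :: "real \<Rightarrow> real" and m :: nat and \<omega> :: "(real^'n::finite) set"
  assumes "m \<ge> 1" and "CARD('n) \<ge> 2"
    and "continuous_on {0..4} f"
    and "\<forall>t\<in>{0<..<4}. f differentiable (at t)"
    and "\<forall>j<2*m-2. \<forall>t\<in>{0<..<4}. ((deriv ^^ j) f) differentiable (at t)"
    and "convex_on {0<..<4} ((deriv ^^ (2*m-2)) f)"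
    and "sharp_config m \<omega>" and "antipodal \<omega>"
  shows "(\<forall>y\<in>\<omega>. \<forall>x\<in>sphere 0 1. potential f \<omega> x \<le> potential f \<omega> y)
       \<and> (strict_convex_on {0<..<4} ((deriv ^^ (2*m-2)) f) \<longrightarrow>
          (\<forall>x\<in>sphere 0 1. (\<forall>z\<in>sphere 0 1. potential f \<omega> z \<le> potential f \<omega> x) \<longrightarrow> x \<in> \<omega>))"
proof -
  have D: "spherical_design (2 * m - 1) \<omega>" using assms(7) by (simp add: sharp_config_def)
  obtain A where A: "finite A" "card A = m - 1" "A \<subseteq> {-1<..<1}"
    and inner: "\<forall>y\<in>\<omega>. \<forall>z\<in>\<omega>. y \<bullet> z \<in> insert 1 (insert (-1) A)"
    using antipodal_sharp_config_inner_products[OF assms(7,8)] by blast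
  have twice: "2 * card A = 2 * m - 2" using A(2) by simp
  let ?N = "(\<lambda>t. 2 - 2 * t) ` insert 1 (insert (-1) A)"
  obtain Q where Q: "degree Q \<le> 2 * card A + 1" "\<forall>v\<in>?N. poly Q v = f v"
      "\<forall>s\<in>{0..4}. f s \<le> poly Q s"
      "strict_convex_on {0<..<4} ((deriv ^^ (2 * card A)) f) \<Longrightarrow> \<forall>s\<in>{0..4} - ?N. f s < poly Q s"
    by (rule hermite_majorant_inner_nodes[OF A(1,3) assms(3)])
      (use assms(4-6) in \<open>auto simp: twice\<close>)
  have deg: "degree Q \<le> 2 * m - 1" using Q(1) twice assms(1) by simp
  have sph: "norm y = 1" if "y \<in> \<omega>" for y using D that by (auto simp: spherical_design_def)
  have eq: "\<forall>y\<in>\<omega>. \<forall>z\<in>\<omega>. f ((norm (y - z))\<^sup>2) = poly Q ((norm (y - z))\<^sup>2)"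
    using inner Q(2) unit_dist_sq_mem_image_iff sph by metis
  show ?thesis
  proof (intro conjI impI ballI)
    show "potential f \<omega> x \<le> potential f \<omega> y" if "y \<in> \<omega>" "x \<in> sphere 0 1" for x y
      using potential_le_at_design_point[OF D deg Q(3) eq] that by simp
  next
    fix x :: "real^'n"
    assume strict: "strict_convex_on {0<..<4} ((deriv ^^ (2 * m - 2)) f)" and "x \<in> sphere 0 1"
      and max: "\<forall>z\<in>sphere 0 1. potential f \<omega> z \<le> potential f \<omega> x"
    then have x: "norm x = 1" by simp
    obtain y where y: "y \<in> \<omega>" using D by (auto simp: spherical_design_def)
    have "\<forall>z\<in>\<omega>. (norm (x - z))\<^sup>2 \<in> ?N"
      using potential_max_dist_sq_in_nodes[OF D deg Q(3) eq Q(4)[unfolded twice, OF strict] x y]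
        max sph y by simp
    then have "\<forall>z\<in>\<omega>. x \<bullet> z \<in> insert 1 (insert (-1) A)"
      using unit_dist_sq_mem_image_iff[OF x] sph by blast
    then show "x \<in> \<omega>"
      using antipodal_design_mem_of_inner_products[OF D assms(8) A(1) _ _ x] A(2,3) by force
  qed
qed

end
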